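(* In the setting described in the context, for a given $x\in\mathcal X$, $\max_{u\in\mathcal U(x)}\min\{c_2y: y\in\mathcal Y(x,u)\}=\max_{u\in\mathcal U^*(x)\cup\mathcal V^*(x)}\min\{c_2y: y\in\mathcal Y(x,u)\}$, where $\mathcal U^*(x)=\bigcup_{\pi\in\mathcal P_\Pi}\mathcal{OU}(x,\pi)$ and $\mathcal V^*(x)=\bigcup_{\gamma\in\mathcal R_\Pi}\mathcal{OU}(x,\gamma)$.
   Context: $\mathcal X=\{x\in\mathbb Z^{m_x}_+\times\mathbb R^{n_x}_+: Ax\ge b\}$, $\mathcal U(x)=\{u\in\mathbb R^{n_u}_+: F(x)u\le h+Gx\}$ with $F(x)$ a matrix depending on $x$, $\mathcal Y(x,u)=\{y\in\mathbb R^{n_y}_+: B_2y\ge d-B_1x-Eu\}$. $\Pi=\{\pi\ge 0: B_2^\intercal\pi\le c_2^\intercal\}$, with finite sets of extreme points $\mathcal P_\Pi$ and extreme rays $\mathcal R_\Pi$. For a vector $\beta$, $\mathcal{OU}(x,\beta)$ denotes the set of optimal solutions of the linear program $\max\{(-Eu)^\intercal\beta: u\in\mathcal U(x)\}$. The optimal value of an infeasible minimization (maximization) problem is $+\infty$ ($-\infty$). Standing assumptions: (A1) $\mathcal U(x)\ne\emptyset$ for all $x\in\mathcal X$; (A2) $\mathcal U(x)$ is bounded for all $x\in\mathcal X$; (A3) $\min\{c_1x+c_2y: x\in\mathcal X,u\in\mathcal U(x),y\in\mathcal Y(x,u)\}$ has a finite optimal value. *)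

theory Defs
  imports "HOL-Analysis.Analysis"
begin

definition nonneg :: "real ^ 'n \<Rightarrow> bool" where
  "nonneg v \<longleftrightarrow> (\<forall>i. 0 \<le> v $ i)"

definition vle :: "real ^ 'n \<Rightarrow> real ^ 'n \<Rightarrow> bool" where
  "vle v w \<longleftrightarrow> (\<forall>i. v $ i \<le> w $ i)"

definition Xset :: "'nx set \<Rightarrow> real ^ 'nx ^ 'p \<Rightarrow> real ^ 'p \<Rightarrow> (real ^ 'nx) set" where
  "Xset Iz A b = {x. nonneg x \<and> (\<forall>i\<in>Iz. x $ i \<in> \<int>) \<and> vle b (A *v x)}"

definition Uset :: "(real ^ 'nx \<Rightarrow> real ^ 'nu ^ 'k) \<Rightarrow> real ^ 'k \<Rightarrow> real ^ 'nx ^ 'k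
                   \<Rightarrow> real ^ 'nx \<Rightarrow> (real ^ 'nu) set" where
  "Uset F h G x = {u. nonneg u \<and> vle (F x *v u) (h + G *v x)}"

definition Yset :: "real ^ 'ny ^ 'm \<Rightarrow> real ^ 'm \<Rightarrow> real ^ 'nx ^ 'm \<Rightarrow> real ^ 'nu ^ 'm
                   \<Rightarrow> real ^ 'nx \<Rightarrow> real ^ 'nu \<Rightarrow> (real ^ 'ny) set" where
  "Yset B2 d B1 E x u = {y. nonneg y \<and> vle (d - B1 *v x - E *v u) (B2 *v y)}"

definition PiSet :: "real ^ 'ny ^ 'm \<Rightarrow> real ^ 'ny \<Rightarrow> (real ^ 'm) set" where
  "PiSet B2 c2 = {\<pi>. nonneg \<pi> \<and> vle (transpose B2 *v \<pi>) c2}"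

definition extreme_points :: "(real ^ 'm) set \<Rightarrow> (real ^ 'm) set" where
  "extreme_points S = {p. p extreme_point_of S}"

text \<open>Recession cone of Pi, and its extreme rays (all nonzero vectors spanning an
  extreme ray of the cone; the paper's finite set R_Pi picks one representative per ray).\<close>
definition recession_cone_Pi :: "real ^ 'ny ^ 'm \<Rightarrow> (real ^ 'm) set" where
  "recession_cone_Pi B2 = {\<gamma>. nonneg \<gamma> \<and> vle (transpose B2 *v \<gamma>) 0}"

definition extreme_rays :: "real ^ 'ny ^ 'm \<Rightarrow> (real ^ 'm) set" where
  "extreme_rays B2 = {\<gamma>. \<gamma> \<in> recession_cone_Pi B2 \<and> \<gamma> \<noteq> 0 \<and>
     (\<forall>a\<in>recession_cone_Pi B2. \<forall>b\<in>recession_cone_Pi B2.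
        \<gamma> = a + b \<longrightarrow> (\<exists>s\<ge>0. a = s *\<^sub>R \<gamma>) \<and> (\<exists>t\<ge>0. b = t *\<^sub>R \<gamma>))}"

definition OU :: "(real ^ 'nx \<Rightarrow> real ^ 'nu ^ 'k) \<Rightarrow> real ^ 'k \<Rightarrow> real ^ 'nx ^ 'k
                 \<Rightarrow> real ^ 'nu ^ 'm \<Rightarrow> real ^ 'nx \<Rightarrow> real ^ 'm \<Rightarrow> (real ^ 'nu) set" where
  "OU F h G E x \<beta> = {u. u \<in> Uset F h G x \<and>
      (\<forall>v\<in>Uset F h G x. (- (E *v v)) \<bullet> \<beta> \<le> (- (E *v u)) \<bullet> \<beta>)}"

text \<open>Second-stage value min{c2 y : y in Y(x,u)} in the extended reals
  (+infinity if infeasible, -infinity if unbounded).\<close>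
definition Qval :: "real ^ 'ny \<Rightarrow> real ^ 'ny ^ 'm \<Rightarrow> real ^ 'm \<Rightarrow> real ^ 'nx ^ 'm
                   \<Rightarrow> real ^ 'nu ^ 'm \<Rightarrow> real ^ 'nx \<Rightarrow> real ^ 'nu \<Rightarrow> ereal" where
  "Qval c2 B2 d B1 E x u = (INF y\<in>Yset B2 d B1 E x u. ereal (c2 \<bullet> y))"

end

theory Submission
  imports Defs
begin

text \<open>Write \<open>w(u) = d - B1 x - E u\<close>, so that the recourse value is the LP value
  \<open>Q(u) = min {c2 y : y \<ge> 0, B2 y \<ge> w(u)}\<close>. By Farkas' lemma this LP is infeasible
  exactly when some extreme ray \<open>\<gamma>\<close> of \<open>\<Pi>\<close> has \<open>\<gamma> w(u) > 0\<close>; otherwise, \<open>\<Pi>\<close> being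
  nonempty by (A3), strong duality gives \<open>Q(u) = \<pi> w(u)\<close> for a vertex \<open>\<pi>\<close> of \<open>\<Pi>\<close>.
  As \<open>\<beta> w(u)\<close> and the objective defining \<open>OU(x, \<beta>)\<close> differ by a constant, in the first
  case every point of \<open>OU(x, \<gamma>)\<close> has \<open>Q = \<infinity>\<close>. In the second case
  \<open>Q(v) = \<pi> w(v) \<le> \<pi> w(u\<^sub>\<pi>) \<le> Q(u\<^sub>\<pi>)\<close> for \<open>u\<^sub>\<pi> \<in> OU(x, \<pi>)\<close>, so the best of the
  finitely many vertices yields a maximiser. Compactness of \<open>U(x)\<close> (A2) makes every
  \<open>OU(x, \<beta>)\<close> nonempty.\<close>

definition lp_feasible :: "real ^ 'ny ^ 'm \<Rightarrow> real ^ 'm \<Rightarrow> (real ^ 'ny) set" where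
  "lp_feasible B2 w = {y. nonneg y \<and> vle w (B2 *v y)}"

definition lp_value :: "real ^ 'ny \<Rightarrow> real ^ 'ny ^ 'm \<Rightarrow> real ^ 'm \<Rightarrow> ereal" where
  "lp_value c2 B2 w = (INF y\<in>lp_feasible B2 w. ereal (c2 \<bullet> y))"

definition maximizers :: "'a set \<Rightarrow> ('a \<Rightarrow> real) \<Rightarrow> 'a set" where
  "maximizers U f = {u \<in> U. \<forall>v\<in>U. f v \<le> f u}"

lemma Yset_eq_lp_feasible: "Yset B2 d B1 E x u = lp_feasible B2 (d - B1 *v x - E *v u)"
  by (simp add: Yset_def lp_feasible_def)

lemma Qval_eq_lp_value: "Qval c2 B2 d B1 E x u = lp_value c2 B2 (d - B1 *v x - E *v u)"
  by (simp add: Qval_def lp_value_def Yset_eq_lp_feasible)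

lemma OU_eq_maximizers:
  "OU F h G E x \<beta> = maximizers (Uset F h G x) (\<lambda>u. \<beta> \<bullet> (d - B1 *v x - E *v u))"
  by (auto simp: OU_def maximizers_def inner_diff_right inner_commute)

lemma maximizers_nonempty_compact:
  fixes f :: "'a::topological_space \<Rightarrow> real"
  assumes "compact U" "U \<noteq> {}" "continuous_on U f"
  shows "maximizers U f \<noteq> {}"
  using continuous_attains_sup[OF assms] by (auto simp: maximizers_def)

lemma maximizers_nonempty_finite:
  assumes "finite U" "U \<noteq> {}"
  shows "maximizers U f \<noteq> {}"
proof -
  have "Max (f ` U) \<in> f ` U" using assms by simp
  then obtain u where "u \<in> U" "f u = Max (f ` U)" by force
  then show ?thesis using assms by (auto simp: maximizers_def)
qed

lemma inner_le_inner_nonneg: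
  fixes p a b :: "real ^ 'n"
  assumes "nonneg p" "vle a b"
  shows "p \<bullet> a \<le> p \<bullet> b"
  using assms unfolding inner_vec_def nonneg_def vle_def
  by (intro sum_mono) (simp add: mult_left_mono)

lemma norm_le_inner_one_nonneg:
  assumes "nonneg (x :: real ^ 'n)"
  shows "norm x \<le> (\<chi> i. 1) \<bullet> x"
proof -
  have "norm x \<le> (\<Sum>i\<in>UNIV. \<bar>x $ i\<bar>)" by (rule norm_le_l1_cart)
  also have "\<dots> = (\<chi> i. 1) \<bullet> x" using assms by (simp add: nonneg_def inner_vec_def)
  finally show ?thesis .
qed

lemma convex_cone_nonneg: "convex_cone {x :: real ^ 'n. nonneg x}"
  by (auto simp: convex_cone_iff nonneg_def)

section \<open>Weak duality for the second-stage LP\<close>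

lemma PiSet_inner_le:
  assumes "\<pi> \<in> PiSet B2 c2" "y \<in> lp_feasible B2 w"
  shows "\<pi> \<bullet> w \<le> c2 \<bullet> y"
proof -
  have "\<pi> \<bullet> w \<le> \<pi> \<bullet> (B2 *v y)"
    using assms by (intro inner_le_inner_nonneg) (auto simp: PiSet_def lp_feasible_def)
  also have "\<dots> = y \<bullet> (transpose B2 *v \<pi>)"
    by (metis dot_lmul_matrix inner_commute transpose_matrix_vector)
  also have "\<dots> \<le> y \<bullet> c2"
    using assms by (intro inner_le_inner_nonneg) (auto simp: PiSet_def lp_feasible_def)
  finally show ?thesis by (simp add: inner_commute)
qed

lemma lp_value_ge_PiSet: "\<pi> \<in> PiSet B2 c2 \<Longrightarrow> ereal (\<pi> \<bullet> w) \<le> lp_value c2 B2 w"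
  unfolding lp_value_def by (rule INF_greatest) (simp add: PiSet_inner_le)

lemma recession_cone_Pi_eq_PiSet: "recession_cone_Pi B2 = PiSet B2 0"
  by (simp add: recession_cone_Pi_def PiSet_def)

lemma lp_value_eq_top_if_recession_direction:
  assumes "\<gamma> \<in> recession_cone_Pi B2" "0 < \<gamma> \<bullet> w"
  shows "lp_value c2 B2 w = \<infinity>"
proof -
  have "lp_feasible B2 w = {}"
    using assms PiSet_inner_le[of \<gamma> B2 0] by (force simp: recession_cone_Pi_eq_PiSet)
  then show ?thesis by (simp add: lp_value_def top_ereal_def)
qed

lemma lp_feasible_unbounded_along_descent:
  assumes y0: "y0 \<in> lp_feasible B2 w" and z: "nonneg z" "nonneg (B2 *v z)" "c2 \<bullet> z < 0"
  shows "\<exists>y\<in>lp_feasible B2 w. c2 \<bullet> y < l"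
proof -
  define s where "s = max 0 ((c2 \<bullet> y0 - l + 1) / - (c2 \<bullet> z))"
  have s0: "0 \<le> s" by (simp add: s_def)
  have "(c2 \<bullet> y0 - l + 1) / - (c2 \<bullet> z) \<le> s"
    unfolding s_def by (rule max.cobounded2)
  then have s1: "c2 \<bullet> y0 - l + 1 \<le> s * - (c2 \<bullet> z)"
    using z(3) by (simp add: field_simps)
  have "y0 + s *\<^sub>R z \<in> lp_feasible B2 w"
    using y0 z s0
    by (auto simp: lp_feasible_def nonneg_def vle_def matrix_vector_right_distrib
        matrix_vector_mult_scaleR intro: add_increasing2)
  moreover have "c2 \<bullet> (y0 + s *\<^sub>R z) < l"
    using s1 by (simp add: algebra_simps)
  ultimately show ?thesis by blast
qed

section \<open>Farkas' lemma and strong duality\<close>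

lemma farkas_convex_cone_hull:
  fixes G :: "'a::euclidean_space set"
  assumes "finite G" "b \<notin> convex_cone hull G"
  obtains a where "a \<bullet> b < 0" "\<And>g. g \<in> G \<Longrightarrow> 0 \<le> a \<bullet> g"
proof -
  obtain a c where ab: "a \<bullet> b < c" and ac: "\<forall>x\<in>convex_cone hull G. c < a \<bullet> x"
    using separating_hyperplane_closed_point[OF convex_convex_cone_hull
        closed_convex_cone_hull[OF assms(1)] assms(2)] by blast
  have c: "c < 0" using ac convex_cone_hull_contains_0 by force
  have "0 \<le> a \<bullet> g" if g: "g \<in> G" for g
  proof (rule ccontr)
    assume "\<not> 0 \<le> a \<bullet> g"
    then have "(c / (a \<bullet> g)) *\<^sub>R g \<in> convex_cone hull G"
      using c by (intro convex_cone_hull_mul hull_inc g) (simp add: divide_nonpos_neg)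
    moreover have "a \<bullet> ((c / (a \<bullet> g)) *\<^sub>R g) = c"
      using \<open>\<not> 0 \<le> a \<bullet> g\<close> by simp
    ultimately show False using ac by force
  qed
  with ab c that show ?thesis by force
qed

lemma farkas_inequalities:
  fixes M :: "real ^ 'm ^ 'n" and a :: "real ^ 'm"
  assumes "\<nexists>\<pi>. nonneg \<pi> \<and> vle (M *v \<pi>) b \<and> a \<bullet> \<pi> \<le> \<beta>"
  obtains z t where "nonneg z" "0 \<le> t" "nonneg (transpose M *v z + t *\<^sub>R a)" "z \<bullet> b + t * \<beta> < 0"
proof -
  (* K is the cone of right-hand sides (b, \<beta>) for which the system is solvable; G generates it. *)
  define f :: "(real ^ 'm) \<times> (real ^ 'n) \<times> real \<Rightarrow> (real ^ 'n) \<times> real"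
    where "f = (\<lambda>(\<pi>, s, \<sigma>). (M *v \<pi> + s, a \<bullet> \<pi> + \<sigma>))"
  define K where "K = f ` ({\<pi>. nonneg \<pi>} \<times> {s. nonneg s} \<times> {\<sigma>. 0 \<le> \<sigma>})"
  define G where
    "G = range (\<lambda>j. (column j M, a $ j)) \<union> range (\<lambda>i. (axis i 1, 0)) \<union> {(0, 1)}"
  have "linear f"
    by (auto simp: f_def linear_iff matrix_vector_right_distrib matrix_vector_mult_scaleR
        scaleR_add_right distrib_left inner_add_right)
  then have "convex_cone K"
    unfolding K_def
    by (intro convex_cone_linear_image conjI convex_cone_Times convex_cone_nonneg)
      (auto simp: convex_cone_iff)
  moreover have "G \<subseteq> K"
  proof -
    have "(column j M, a $ j) \<in> K" for j
      unfolding K_def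
      by (rule rev_image_eqI[of "(axis j 1, 0, 0)"])
        (simp add: nonneg_def axis_def, simp add: f_def matrix_vector_mult_basis inner_axis)
    moreover have "(axis i 1, 0) \<in> K" for i
      unfolding K_def
      by (rule rev_image_eqI[of "(0, axis i 1, 0)"]) (simp_all add: f_def nonneg_def axis_def)
    moreover have "(0, 1) \<in> K"
      unfolding K_def
      by (rule rev_image_eqI[of "(0, 0, 1)"]) (simp_all add: f_def nonneg_def)
    ultimately show ?thesis
      by (auto simp: G_def)
  qed
  ultimately have "convex_cone hull G \<subseteq> K"
    by (rule hull_minimal[rotated])
  moreover have "(b, \<beta>) \<notin> K"
    using assms by (force simp: K_def f_def nonneg_def vle_def)
  ultimately have "(b, \<beta>) \<notin> convex_cone hull G"
    by blast
  moreover have "finite G"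
    by (simp add: G_def)
  ultimately obtain q where q: "q \<bullet> (b, \<beta>) < 0" "\<And>g. g \<in> G \<Longrightarrow> 0 \<le> q \<bullet> g"
    using farkas_convex_cone_hull by blast
  obtain z t where qzt: "q = (z, t)" by fastforce
  have "(transpose M *v z) $ j = z \<bullet> column j M" for j
    by (simp add: vector_matrix_mult_def inner_vec_def column_def mult.commute)
  then have "nonneg (transpose M *v z + t *\<^sub>R a)"
    using q(2)[of "(column _ M, a $ _)"] by (auto simp: nonneg_def G_def qzt)
  moreover have "nonneg z" "0 \<le> t"
    using q(2)[of "(axis _ 1, 0)"] q(2)[of "(0, 1)"]
    by (auto simp: nonneg_def G_def qzt inner_axis)
  ultimately show ?thesis
    using that q(1) by (simp add: qzt)
qed

lemma dual_value_reaches_lower_bound: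
  assumes y0: "y0 \<in> lp_feasible B2 w" and lower: "\<And>y. y \<in> lp_feasible B2 w \<Longrightarrow> v \<le> c2 \<bullet> y"
  shows "\<exists>\<pi>\<in>PiSet B2 c2. v \<le> \<pi> \<bullet> w"
proof (rule ccontr)
  assume "\<not> ?thesis"
  then have "\<nexists>\<pi>. nonneg \<pi> \<and> vle (transpose B2 *v \<pi>) c2 \<and> (- w) \<bullet> \<pi> \<le> - v"
    by (auto simp: PiSet_def inner_commute)
  then obtain z t where z: "nonneg z" and t: "0 \<le> t"
    and Bz: "nonneg (B2 *v z - t *\<^sub>R w)" and cz: "z \<bullet> c2 < t * v"
    by (rule farkas_inequalities) auto
  (* For t > 0 the certificate rescales to a feasible point below v; for t = 0 it is a
     direction along which the objective decreases without bound. *)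
  show False
  proof (cases "t = 0")
    case True
    then have "nonneg (B2 *v z)" "c2 \<bullet> z < 0"
      using Bz cz by (simp_all add: inner_commute)
    then obtain y where "y \<in> lp_feasible B2 w" "c2 \<bullet> y < v"
      using lp_feasible_unbounded_along_descent[OF y0 z] by blast
    with lower show False by fastforce
  next
    case False
    with t have "0 < t" by simp
    then have "(1 / t) *\<^sub>R z \<in> lp_feasible B2 w"
      using z Bz
      by (auto simp: lp_feasible_def nonneg_def vle_def matrix_vector_mult_scaleR field_simps)
    moreover have "c2 \<bullet> ((1 / t) *\<^sub>R z) < v"
      using cz \<open>0 < t\<close> by (simp add: inner_commute field_simps)
    ultimately show False
      using lower by fastforce
  qed
qed

lemma extreme_point_exists_nonneg:
  fixes S :: "(real ^ 'n) set"
  assumes S: "closed S" "convex S" "S \<noteq> {}" and nonneg: "\<And>x. x \<in> S \<Longrightarrow> nonneg x"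
  obtains p where "p extreme_point_of S"
proof -
  (* On the orthant the coordinate sum dominates the norm, so it attains its minimum on S
     and the minimising face is compact. *)
  let ?one = "(\<chi> i. 1) :: real ^ 'n"
  obtain x0 where x0: "x0 \<in> S" using S(3) by blast
  define S0 where "S0 = S \<inter> {x. ?one \<bullet> x \<le> ?one \<bullet> x0}"
  have "norm x \<le> ?one \<bullet> x0" if "x \<in> S0" for x
    using that nonneg[of x] norm_le_inner_one_nonneg[of x] by (auto simp: S0_def)
  then have "bounded S0"
    by (auto simp: bounded_iff)
  then have "compact S0"
    unfolding compact_eq_bounded_closed S0_def using S(1) by (simp add: closed_Int closed_halfspace_le)
  moreover have "x0 \<in> S0" using x0 by (simp add: S0_def)
  ultimately obtain xm where xm: "xm \<in> maximizers S0 (\<lambda>x. - (?one \<bullet> x))"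
    using maximizers_nonempty_compact[of S0 "\<lambda>x. - (?one \<bullet> x)"]
    by (fastforce intro: continuous_intros)
  have min: "?one \<bullet> xm \<le> ?one \<bullet> x" if "x \<in> S" for x
    using xm that x0 by (cases "x \<in> S0") (auto simp: maximizers_def S0_def)
  define F where "F = S \<inter> {x. ?one \<bullet> x = ?one \<bullet> xm}"
  have face: "F face_of S"
    unfolding F_def using S(2) min by (rule face_of_Int_supporting_hyperplane_ge)
  have "F = S0 \<inter> {x. ?one \<bullet> x = ?one \<bullet> xm}"
    using xm by (auto simp: F_def S0_def maximizers_def)
  then have "compact F"
    using \<open>compact S0\<close> by (simp add: closed_hyperplane compact_Int_closed)
  moreover have "convex F" "F \<noteq> {}"
    using S(2) xm by (auto simp: F_def S0_def maximizers_def intro: convex_Int convex_hyperplane)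
  ultimately obtain p where "p extreme_point_of F"
    using extreme_point_exists_convex by blast
  with face show ?thesis
    using extreme_point_of_face that by blast
qed

lemma extreme_point_maximizer_nonneg:
  fixes S :: "(real ^ 'n) set"
  assumes "closed S" "convex S" "\<And>x. x \<in> S \<Longrightarrow> nonneg x" and x0: "x0 \<in> maximizers S (\<lambda>x. a \<bullet> x)"
  obtains p where "p extreme_point_of S" "a \<bullet> p = a \<bullet> x0"
proof -
  define F where "F = S \<inter> {x. a \<bullet> x = a \<bullet> x0}"
  have face: "F face_of S"
    unfolding F_def using assms(2) x0
    by (intro face_of_Int_supporting_hyperplane_le) (auto simp: maximizers_def)
  have "closed F" "convex F" "F \<noteq> {}" "\<And>x. x \<in> F \<Longrightarrow> nonneg x"
    using assms x0
    by (auto simp: F_def maximizers_def intro: closed_Int closed_hyperplane convex_Int convex_hyperplane)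
  then obtain p where "p extreme_point_of F"
    by (rule extreme_point_exists_nonneg)
  with face that show ?thesis
    by (auto simp: extreme_point_of_face F_def)
qed

lemma polyhedron_PiSet: "polyhedron (PiSet B2 c2)"
proof -
  have "(transpose B2 *v \<pi>) $ j = column j B2 \<bullet> \<pi>" for \<pi> j
    by (simp add: vector_matrix_mult_def inner_vec_def column_def mult.commute)
  then have "PiSet B2 c2 = (\<Inter>i. {\<pi>. axis i 1 \<bullet> \<pi> \<ge> 0}) \<inter> (\<Inter>j. {\<pi>. column j B2 \<bullet> \<pi> \<le> c2 $ j})"
    by (auto simp: PiSet_def nonneg_def vle_def inner_axis inner_commute)
  then show ?thesis
    by (auto intro!: polyhedron_Int polyhedron_Inter polyhedron_halfspace_le polyhedron_halfspace_ge)
qed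

lemma lp_value_eq_at_extreme_point:
  assumes feasible: "lp_feasible B2 w \<noteq> {}" and dual_feasible: "PiSet B2 c2 \<noteq> {}"
  shows "\<exists>p\<in>extreme_points (PiSet B2 c2). lp_value c2 B2 w = ereal (p \<bullet> w)"
proof -
  obtain y0 where y0: "y0 \<in> lp_feasible B2 w" using feasible by blast
  obtain \<pi>0 where \<pi>0: "\<pi>0 \<in> PiSet B2 c2" using dual_feasible by blast
  obtain v where v: "lp_value c2 B2 w = ereal v"
    using lp_value_ge_PiSet[OF \<pi>0, of w] INF_lower[OF y0, of "\<lambda>y. ereal (c2 \<bullet> y)"]
    by (cases "lp_value c2 B2 w") (auto simp: lp_value_def)
  have "v \<le> c2 \<bullet> y" if "y \<in> lp_feasible B2 w" for y
    using INF_lower[OF that, of "\<lambda>y. ereal (c2 \<bullet> y)"] v by (simp add: lp_value_def)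
  then obtain \<pi>1 where \<pi>1: "\<pi>1 \<in> PiSet B2 c2" "v \<le> \<pi>1 \<bullet> w"
    using dual_value_reaches_lower_bound[OF y0] by blast
  have upper: "\<pi> \<bullet> w \<le> v" if "\<pi> \<in> PiSet B2 c2" for \<pi>
    using lp_value_ge_PiSet[OF that, of w] v by simp
  then have "\<pi>1 \<in> maximizers (PiSet B2 c2) (\<lambda>\<pi>. w \<bullet> \<pi>)"
    using \<pi>1 by (force simp: maximizers_def inner_commute)
  moreover have "closed (PiSet B2 c2)" "convex (PiSet B2 c2)"
    using polyhedron_PiSet polyhedron_imp_closed polyhedron_imp_convex by blast+
  moreover have "\<And>\<pi>. \<pi> \<in> PiSet B2 c2 \<Longrightarrow> nonneg \<pi>"
    by (simp add: PiSet_def)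
  ultimately obtain p where p: "p extreme_point_of PiSet B2 c2" "w \<bullet> p = w \<bullet> \<pi>1"
    using extreme_point_maximizer_nonneg by metis
  then have "p \<bullet> w = v"
    using upper[of p] upper[OF \<pi>1(1)] \<pi>1(2) by (simp add: extreme_point_of_def inner_commute)
  then show ?thesis
    using p(1) v by (auto simp: extreme_points_def)
qed

section \<open>Extreme rays of the dual recession cone\<close>

lemma conic_recession_cone_Pi: "conic (recession_cone_Pi B2)"
  by (auto simp: conic_def recession_cone_Pi_def nonneg_def vle_def scaleR_vector_matrix_assoc
      vector_scaleR_matrix_ac mult_nonneg_nonpos)

lemma extreme_point_of_recession_cone_section:
  fixes B2 :: "real ^ 'ny ^ 'm"
  assumes e: "e extreme_point_of (recession_cone_Pi B2 \<inter> {x. (\<chi> i. 1) \<bullet> x = 1})"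
  shows "e \<in> extreme_rays B2"
proof -
  let ?one = "(\<chi> i. 1) :: real ^ 'm"
  let ?C = "recession_cone_Pi B2"
  have eC: "e \<in> ?C" "?one \<bullet> e = 1"
    using e by (auto simp: extreme_point_of_def)
  have "(\<exists>s\<ge>0. a = s *\<^sub>R e) \<and> (\<exists>t\<ge>0. b = t *\<^sub>R e)"
    if a: "a \<in> ?C" and b: "b \<in> ?C" and eab: "e = a + b" for a b
  proof -
    define sa sb where "sa = ?one \<bullet> a" and "sb = ?one \<bullet> b"
    have norm: "norm a \<le> sa" "norm b \<le> sb"
      using a b norm_le_inner_one_nonneg by (auto simp: sa_def sb_def recession_cone_Pi_def)
    have sum: "sa + sb = 1"
      using eC(2) eab by (simp add: sa_def sb_def inner_add_right)
    consider "a = 0" | "b = 0" | "0 < sa" "0 < sb"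
      using norm by (metis zero_less_norm_iff order_less_le_trans)
    then show ?thesis
    proof cases
      case 1
      then show ?thesis using eab by (intro conjI exI[of _ 0] exI[of _ 1]) auto
    next
      case 2
      then show ?thesis using eab by (intro conjI exI[of _ 1] exI[of _ 0]) auto
    next
      case 3
      define a' b' where "a' = (1 / sa) *\<^sub>R a" and "b' = (1 / sb) *\<^sub>R b"
      have normalized: "a' \<in> ?C \<inter> {x. ?one \<bullet> x = 1}" "b' \<in> ?C \<inter> {x. ?one \<bullet> x = 1}"
        using 3 a b conic_recession_cone_Pi[of B2]
        by (auto simp: a'_def b'_def sa_def sb_def conic_def)
      have scaled: "a = sa *\<^sub>R a'" "b = sb *\<^sub>R b'"
        using 3 by (auto simp: a'_def b'_def)
      have "sa = 1 - sb"
        using sum by simp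
      then have e_comb: "e = (1 - sb) *\<^sub>R a' + sb *\<^sub>R b'"
        using eab scaled by simp
      have "a' = b'"
      proof (rule ccontr)
        assume "a' \<noteq> b'"
        moreover have "sb < 1" using 3 sum by simp
        ultimately have "e \<in> open_segment a' b'"
          using e_comb 3 by (auto simp: in_segment)
        with e normalized show False
          by (auto simp: extreme_point_of_def)
      qed
      then have "e = a'"
        using e_comb by (simp add: algebra_simps flip: scaleR_add_left)
      then show ?thesis
        using scaled \<open>a' = b'\<close> 3 by (intro conjI exI[of _ sa] exI[of _ sb]) auto
    qed
  qed
  with eC show ?thesis
    by (auto simp: extreme_rays_def)
qed

lemma extreme_ray_exists:
  fixes B2 :: "real ^ 'ny ^ 'm"
  assumes \<gamma>: "\<gamma> \<in> recession_cone_Pi B2" "0 < \<gamma> \<bullet> w"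
  shows "\<exists>\<gamma>'\<in>extreme_rays B2. 0 < \<gamma>' \<bullet> w"
proof -
  (* The cone lies in the orthant, so fixing the coordinate sum gives a compact base ?S;
     an extreme point of ?S maximising w spans the required extreme ray. *)
  let ?one = "(\<chi> i. 1) :: real ^ 'm"
  let ?S = "recession_cone_Pi B2 \<inter> {x. ?one \<bullet> x = 1}"
  have nonneg: "\<And>x. x \<in> ?S \<Longrightarrow> nonneg x"
    by (simp add: recession_cone_Pi_def)
  have "polyhedron (recession_cone_Pi B2)"
    by (simp add: recession_cone_Pi_eq_PiSet polyhedron_PiSet)
  then have "closed ?S" "convex ?S"
    by (simp_all add: polyhedron_imp_closed polyhedron_imp_convex closed_Int closed_hyperplane
        convex_Int convex_hyperplane)
  moreover have "norm x \<le> 1" if "x \<in> ?S" for x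
    using that nonneg[OF that] norm_le_inner_one_nonneg[of x] by simp
  then have "bounded ?S"
    by (auto simp: bounded_iff)
  ultimately have "compact ?S"
    by (simp add: compact_eq_bounded_closed)
  have "0 < norm \<gamma>" using \<gamma>(2) by auto
  moreover have "norm \<gamma> \<le> ?one \<bullet> \<gamma>"
    using \<gamma>(1) by (intro norm_le_inner_one_nonneg) (simp add: recession_cone_Pi_def)
  ultimately have pos: "0 < ?one \<bullet> \<gamma>"
    by linarith
  define g where "g = (1 / (?one \<bullet> \<gamma>)) *\<^sub>R \<gamma>"
  have "g \<in> ?S"
    using pos \<gamma>(1) conic_recession_cone_Pi[of B2] by (auto simp: g_def conic_def)
  moreover have "0 < w \<bullet> g"
    using pos \<gamma>(2) by (simp add: g_def inner_commute)
  moreover obtain gm where gm: "gm \<in> maximizers ?S (\<lambda>x. w \<bullet> x)"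
    using maximizers_nonempty_compact[OF \<open>compact ?S\<close>, of "\<lambda>x. w \<bullet> x"] \<open>g \<in> ?S\<close>
    by (fastforce intro: continuous_intros)
  ultimately have "0 < w \<bullet> gm"
    by (force simp: maximizers_def)
  obtain e where "e extreme_point_of ?S" "w \<bullet> e = w \<bullet> gm"
    using extreme_point_maximizer_nonneg[OF \<open>closed ?S\<close> \<open>convex ?S\<close> nonneg gm] by blast
  with \<open>0 < w \<bullet> gm\<close> show ?thesis
    using extreme_point_of_recession_cone_section by (metis inner_commute)
qed

lemma lp_feasible_nonempty_if_extreme_rays_nonpos:
  assumes "\<And>\<gamma>. \<gamma> \<in> extreme_rays B2 \<Longrightarrow> \<gamma> \<bullet> w \<le> 0"
  shows "lp_feasible B2 w \<noteq> {}"
proof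
  assume "lp_feasible B2 w = {}"
  then have "\<nexists>y. nonneg y \<and> vle ((- B2) *v y) (- w) \<and> 0 \<bullet> y \<le> 0"
    by (auto simp: lp_feasible_def vle_def matrix_vector_mul_component)
  then obtain z where "nonneg z" "nonneg (transpose (- B2) *v z)" "z \<bullet> (- w) < 0"
    by (rule farkas_inequalities) auto
  then have "z \<in> recession_cone_Pi B2" "0 < z \<bullet> w"
    by (auto simp: recession_cone_Pi_def nonneg_def vle_def vector_matrix_mult_def sum_negf)
  then show False
    using extreme_ray_exists assms by fastforce
qed

section \<open>Maximising the recourse value\<close>

lemma lp_value_maximized_at_extreme_point_maximizer:
  fixes w :: "'u \<Rightarrow> real ^ 'm" and B2 :: "real ^ 'ny ^ 'm"
  assumes dual_feasible: "PiSet B2 c2 \<noteq> {}"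
    and rays: "\<And>\<gamma> v. \<gamma> \<in> extreme_rays B2 \<Longrightarrow> v \<in> U \<Longrightarrow> \<gamma> \<bullet> w v \<le> 0"
    and attained: "\<And>\<beta>. maximizers U (\<lambda>u. \<beta> \<bullet> w u) \<noteq> {}"
  shows "\<exists>p\<in>extreme_points (PiSet B2 c2). \<exists>u\<in>maximizers U (\<lambda>u. p \<bullet> w u).
           \<forall>v\<in>U. lp_value c2 B2 (w v) \<le> lp_value c2 B2 (w u)"
proof -
  let ?P = "extreme_points (PiSet B2 c2)"
  have vertex: "\<exists>p\<in>?P. lp_value c2 B2 (w v) = ereal (p \<bullet> w v)" if "v \<in> U" for v
    using lp_value_eq_at_extreme_point[OF lp_feasible_nonempty_if_extreme_rays_nonpos dual_feasible]
      rays that by blast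
  define u where "u p = (SOME u. u \<in> maximizers U (\<lambda>u. p \<bullet> w u))" for p
  have u: "u p \<in> maximizers U (\<lambda>v. p \<bullet> w v)" for p
    unfolding u_def using attained by (simp add: some_in_eq)
  have "finite ?P"
    using finite_polyhedron_extreme_points[OF polyhedron_PiSet] by (simp add: extreme_points_def)
  moreover have "?P \<noteq> {}"
    using vertex u[of 0] by (auto simp: maximizers_def)
  ultimately obtain p0 where p0: "p0 \<in> maximizers ?P (\<lambda>p. p \<bullet> w (u p))"
    using maximizers_nonempty_finite by blast
  have "lp_value c2 B2 (w v) \<le> lp_value c2 B2 (w (u p0))" if v: "v \<in> U" for v
  proof -
    obtain p where p: "p \<in> ?P" "lp_value c2 B2 (w v) = ereal (p \<bullet> w v)"
      using vertex[OF v] by blast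
    have "p \<bullet> w v \<le> p \<bullet> w (u p)"
      using u[of p] v by (simp add: maximizers_def)
    also have "\<dots> \<le> p0 \<bullet> w (u p0)"
      using p0 p(1) by (simp add: maximizers_def)
    finally have "lp_value c2 B2 (w v) \<le> ereal (p0 \<bullet> w (u p0))"
      using p(2) by simp
    also have "\<dots> \<le> lp_value c2 B2 (w (u p0))"
      using p0 by (intro lp_value_ge_PiSet)
        (auto simp: maximizers_def extreme_points_def extreme_point_of_def)
    finally show ?thesis .
  qed
  then show ?thesis
    using p0 u[of p0] by (auto simp: maximizers_def)
qed

lemma lp_value_maximized_at_extreme_point_or_ray_maximizer:
  fixes w :: "'u \<Rightarrow> real ^ 'm" and B2 :: "real ^ 'ny ^ 'm"
  assumes dual_feasible: "PiSet B2 c2 \<noteq> {}"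
    and attained: "\<And>\<beta>. maximizers U (\<lambda>u. \<beta> \<bullet> w u) \<noteq> {}"
  shows "\<exists>u\<in>(\<Union>\<pi>\<in>extreme_points (PiSet B2 c2). maximizers U (\<lambda>u. \<pi> \<bullet> w u))
            \<union> (\<Union>\<gamma>\<in>extreme_rays B2. maximizers U (\<lambda>u. \<gamma> \<bullet> w u)).
           \<forall>v\<in>U. lp_value c2 B2 (w v) \<le> lp_value c2 B2 (w u)"
proof (cases "\<exists>\<gamma>\<in>extreme_rays B2. \<exists>v\<in>U. 0 < \<gamma> \<bullet> w v")
  case True
  then obtain \<gamma> v where \<gamma>: "\<gamma> \<in> extreme_rays B2" and v: "v \<in> U" "0 < \<gamma> \<bullet> w v"
    by blast
  obtain u where u: "u \<in> maximizers U (\<lambda>u. \<gamma> \<bullet> w u)"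
    using attained by blast
  then have "0 < \<gamma> \<bullet> w u"
    using v by (force simp: maximizers_def)
  then have "lp_value c2 B2 (w u) = \<infinity>"
    using \<gamma> by (intro lp_value_eq_top_if_recession_direction) (auto simp: extreme_rays_def)
  then show ?thesis
    using \<gamma> u by (intro bexI[of _ u]) auto
next
  case False
  then show ?thesis
    using lp_value_maximized_at_extreme_point_maximizer[OF dual_feasible _ attained]
    by (fastforce simp: not_less)
qed

lemma PiSet_nonempty_if_total_cost_finite:
  assumes "\<bar>INF (x', u, y) \<in> {(x', u, y). x' \<in> X \<and> u \<in> U x' \<and> y \<in> Yset B2 d B1 E x' u}.
             ereal (c1 \<bullet> x' + c2 \<bullet> y)\<bar> \<noteq> \<infinity>"
  shows "PiSet B2 c2 \<noteq> {}"
proof -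
  define S where "S = {(x', u, y). x' \<in> X \<and> u \<in> U x' \<and> y \<in> Yset B2 d B1 E x' u}"
  define I where "I = (INF (x', u, y) \<in> S. ereal (c1 \<bullet> x' + c2 \<bullet> y))"
  obtain r where r: "I = ereal r"
    using assms by (cases I) (auto simp: I_def S_def)
  then have "S \<noteq> {}"
    by (auto simp: I_def top_ereal_def)
  then obtain x' u' y' where "(x', u', y') \<in> S"
    by auto
  then have y': "y' \<in> lp_feasible B2 (d - B1 *v x' - E *v u')"
    and S: "\<And>y. y \<in> lp_feasible B2 (d - B1 *v x' - E *v u') \<Longrightarrow> (x', u', y) \<in> S"
    by (auto simp: S_def Yset_eq_lp_feasible)
  have "r - c1 \<bullet> x' \<le> c2 \<bullet> y" if "y \<in> lp_feasible B2 (d - B1 *v x' - E *v u')" for y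
  proof -
    have "I \<le> ereal (c1 \<bullet> x' + c2 \<bullet> y)"
      unfolding I_def by (rule INF_lower2[OF S[OF that]]) simp
    then show ?thesis
      using r by simp
  qed
  then show ?thesis
    using dual_value_reaches_lower_bound[OF y'] by blast
qed

lemma compact_Uset:
  assumes "bounded (Uset F h G x)"
  shows "compact (Uset F h G x)"
proof -
  have "Uset F h G x = {u. nonneg u} \<inter> {u. vle (F x *v u) (h + G *v x)}"
    by (auto simp: Uset_def)
  then have "closed (Uset F h G x)"
    unfolding nonneg_def vle_def matrix_vector_mul_component
    by (simp add: closed_Int closed_positive_orthant closed_Collect_all closed_halfspace_le)
  with assms show ?thesis
    by (simp add: compact_eq_bounded_closed)
qed

theorem lemma4:
  fixes Iz :: "'nx::finite set"
    and A :: "real ^ 'nx ^ 'p::finite" and b :: "real ^ 'p"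
    and F :: "real ^ 'nx \<Rightarrow> real ^ 'nu::finite ^ 'k::finite" and h :: "real ^ 'k" and G :: "real ^ 'nx ^ 'k"
    and B1 :: "real ^ 'nx ^ 'm" and B2 :: "real ^ 'ny::finite ^ 'm::finite" and E :: "real ^ 'nu ^ 'm"
    and d :: "real ^ 'm" and c1 :: "real ^ 'nx" and c2 :: "real ^ 'ny"
    and x :: "real ^ 'nx"
  assumes A1: "\<forall>x'\<in>Xset Iz A b. Uset F h G x' \<noteq> {}"
    and A2: "\<forall>x'\<in>Xset Iz A b. bounded (Uset F h G x')"
    and A3: "\<bar>INF (x', u, y) \<in> {(x', u, y). x' \<in> Xset Iz A b \<and> u \<in> Uset F h G x'
                                  \<and> y \<in> Yset B2 d B1 E x' u}.
               ereal (c1 \<bullet> x' + c2 \<bullet> y)\<bar> \<noteq> \<infinity>"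
    and hx: "x \<in> Xset Iz A b"
  shows "(\<exists>u\<in>Uset F h G x. Qval c2 B2 d B1 E x u
              = (SUP u'\<in>Uset F h G x. Qval c2 B2 d B1 E x u'))
       \<and> (\<exists>u\<in>(\<Union>\<pi>\<in>extreme_points (PiSet B2 c2). OU F h G E x \<pi>)
                \<union> (\<Union>\<gamma>\<in>extreme_rays B2. OU F h G E x \<gamma>).
            Qval c2 B2 d B1 E x u
              = (SUP u'\<in>(\<Union>\<pi>\<in>extreme_points (PiSet B2 c2). OU F h G E x \<pi>)
                         \<union> (\<Union>\<gamma>\<in>extreme_rays B2. OU F h G E x \<gamma>).
                   Qval c2 B2 d B1 E x u'))
       \<and> (SUP u\<in>Uset F h G x. Qval c2 B2 d B1 E x u)
         = (SUP u\<in>(\<Union>\<pi>\<in>extreme_points (PiSet B2 c2). OU F h G E x \<pi>)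
                  \<union> (\<Union>\<gamma>\<in>extreme_rays B2. OU F h G E x \<gamma>).
              Qval c2 B2 d B1 E x u)"
proof -
  let ?U = "Uset F h G x"
  let ?T = "(\<Union>\<pi>\<in>extreme_points (PiSet B2 c2). OU F h G E x \<pi>)
              \<union> (\<Union>\<gamma>\<in>extreme_rays B2. OU F h G E x \<gamma>)"
  let ?Q = "Qval c2 B2 d B1 E x"
  have "compact ?U" "?U \<noteq> {}"
    using A1 A2 hx compact_Uset by blast+
  then have attained: "\<And>\<beta>. maximizers ?U (\<lambda>u. \<beta> \<bullet> (d - B1 *v x - E *v u)) \<noteq> {}"
    by (intro maximizers_nonempty_compact continuous_intros)
  have dual_feasible: "PiSet B2 c2 \<noteq> {}"
    by (rule PiSet_nonempty_if_total_cost_finite[OF A3])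
  have "\<exists>u\<in>?T. \<forall>v\<in>?U. ?Q v \<le> ?Q u"
    using lp_value_maximized_at_extreme_point_or_ray_maximizer[OF dual_feasible attained]
    by (simp only: OU_eq_maximizers[symmetric] Qval_eq_lp_value[symmetric])
  then obtain u where u: "u \<in> ?T" and max: "\<forall>v\<in>?U. ?Q v \<le> ?Q u"
    by blast
  have "?T \<subseteq> ?U"
    by (auto simp: OU_def)
  have sup: "(SUP v\<in>V. ?Q v) = ?Q u" if "u \<in> V" "V \<subseteq> ?U" for V
    using that max by (intro cSup_eq_maximum) auto
  have "u \<in> ?U"
    using u \<open>?T \<subseteq> ?U\<close> by blast
  then show ?thesis
    using sup[OF \<open>u \<in> ?U\<close> order_refl] sup[OF u \<open>?T \<subseteq> ?U\<close>] u
    by (intro conjI bexI[of _ u]) simp_all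
qed

end
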